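(* Let $G$ be an acyclic ADT network with a multicast connection $\mathcal C=\{(S,T_1,\mathcal X(S)),\dots,(S,T_N,\mathcal X(S))\}$. Let $\mathcal F$ be the set of all link-failure patterns $f$ for which $(G_f,\mathcal C)$ is solvable. Then there is a single fixed (static) linear network code that solves $(G_f,\mathcal C)$ simultaneously for every $f\in\mathcal F$, i.e. it achieves the multicast rate whatever failure $f\in\mathcal F$ occurs. Such a code exists over $\mathbb F_q$ whenever $q>|\mathcal F|N$.
   Context: ADT network model. $G=(\mathcal V,\mathcal E)$ is a directed acyclic network of supernodes, each with input ports $I(V)$ and output ports $O(V)$. Edges go from output ports to input ports of other supernodes. Linear coding over a finite field $\mathbb F_q$: - An output port $e\in O(V)$ carries $Y(e)=\sum_{e'\in I(V)}\beta_{(e',e)}Y(e')$. At $S$, the term $\sum_k\alpha_{(k,e)}X(S,k)$ is added. - An output port sends the same symbol on all of its outgoing edges. - An input port $e'$ receives $Y(e')=\sum_{(e,e')\in\mathcal E}Y(e)$, the sum taken over $\mathbb F_q$. - A destination $T$ outputs $Z(T,k)=\sum_{e'\in I(T)}\epsilon_{(e',(T,k))}Y(e')$. A failure pattern $f$ is a set of links of $G$. $G_f$ is the network $G$ with those links deleted, which is equivalent to setting to zero the coding variables associated with the failed links. $(G_f,\mathcal C)$ is solvable if some coefficient choice makes every $T_i$ output exactly $\mathcal X(S)$ in $G_f$. A code solves $(G_f,\mathcal C)$ if, when used unchanged in $G_f$, every $T_i$ can recover $\mathcal X(S)$, i.e. each square system matrix from $\mathcal X(S)$ to $T_i$ in $G_f$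 is nonsingular. *)

theory Defs
  imports "HOL-Analysis.Determinants"
begin

text \<open>ADT network: supernodes V (type 'v), ports (type 'p); In v / Out v are the
input / output ports of supernode v; E is the set of links (output port, input port).
Source S, destinations T 0, ..., T (N-1).  Source symbols X(S,k) are indexed by
the finite type 'k (the multicast rate is CARD('k)).\<close>

definition node_graph ::
  "'v set \<Rightarrow> ('v \<Rightarrow> 'p set) \<Rightarrow> ('v \<Rightarrow> 'p set) \<Rightarrow> ('p \<times> 'p) set \<Rightarrow> ('v \<times> 'v) set" where
  "node_graph V In Out E =
     {(u, v). u \<in> V \<and> v \<in> V \<and> (\<exists>e e'. (e, e') \<in> E \<and> e \<in> Out u \<and> e' \<in> In v)}"

definition adt_network ::
  "'v set \<Rightarrow> ('v \<Rightarrow> 'p set) \<Rightarrow> ('v \<Rightarrow> 'p set) \<Rightarrow> ('p \<times> 'p) set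
   \<Rightarrow> 'v \<Rightarrow> (nat \<Rightarrow> 'v) \<Rightarrow> nat \<Rightarrow> bool" where
  "adt_network V In Out E S T N \<longleftrightarrow>
     finite V \<and>
     (\<forall>v\<in>V. finite (In v) \<and> finite (Out v)) \<and>
     (\<forall>u\<in>V. \<forall>v\<in>V. In u \<inter> Out v = {}) \<and>
     (\<forall>u\<in>V. \<forall>v\<in>V. u \<noteq> v \<longrightarrow> In u \<inter> In v = {} \<and> Out u \<inter> Out v = {}) \<and>
     E \<subseteq> {(e, e'). \<exists>u\<in>V. \<exists>v\<in>V. u \<noteq> v \<and> e \<in> Out u \<and> e' \<in> In v} \<and>
     acyclic (node_graph V In Out E) \<and>
     S \<in> V \<and> (\<forall>i<N. T i \<in> V \<and> T i \<noteq> S)"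

text \<open>A linear code over the field 'a: alpha k e = \<alpha>_(k,e), beta e' e = \<beta>_(e',e),
eps T e' k = \<epsilon>_(e',(T,k)).\<close>

record ('a, 'k, 'p, 'v) lcode =
  alpha :: "'k \<Rightarrow> 'p \<Rightarrow> 'a"
  beta  :: "'p \<Rightarrow> 'p \<Rightarrow> 'a"
  eps   :: "'v \<Rightarrow> 'p \<Rightarrow> 'k \<Rightarrow> 'a"

definition ports :: "'v set \<Rightarrow> ('v \<Rightarrow> 'p set) \<Rightarrow> ('v \<Rightarrow> 'p set) \<Rightarrow> 'p set" where
  "ports V In Out = (\<Union>v\<in>V. In v \<union> Out v)"

text \<open>The network equations for the code c in G_f (links in f deleted), with source
input X :: 'k \<Rightarrow> 'a.  Y is normalised to 0 outside the ports.\<close>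

definition adt_eqs ::
  "'v set \<Rightarrow> ('v \<Rightarrow> 'p set) \<Rightarrow> ('v \<Rightarrow> 'p set) \<Rightarrow> ('p \<times> 'p) set \<Rightarrow> 'v
   \<Rightarrow> ('a::field, 'k::finite, 'p, 'v) lcode \<Rightarrow> ('p \<times> 'p) set \<Rightarrow> ('k \<Rightarrow> 'a) \<Rightarrow> ('p \<Rightarrow> 'a) \<Rightarrow> bool" where
  "adt_eqs V In Out E S c f X Y \<longleftrightarrow>
     (\<forall>v\<in>V. \<forall>e\<in>Out v.
        Y e = (\<Sum>e'\<in>In v. beta c e' e * Y e')
              + (if v = S then (\<Sum>k\<in>UNIV. alpha c k e * X k) else 0)) \<and>
     (\<forall>v\<in>V. \<forall>e'\<in>In v. Y e' = (\<Sum>e\<in>{e. (e, e') \<in> E - f}. Y e)) \<and>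
     (\<forall>e. e \<notin> ports V In Out \<longrightarrow> Y e = 0)"

definition adt_Y where
  "adt_Y V In Out E S c f X = (THE Y. adt_eqs V In Out E S c f X Y)"

definition adt_Z where
  "adt_Z V In Out E S c f X T k =
     (\<Sum>e'\<in>In T. eps c T e' k * adt_Y V In Out E S c f X e')"

text \<open>Square system matrix from X(S) to destination T in G_f (entry (k',k) is the
gain from X(S,k) to Z(T,k')).\<close>
definition system_matrix ::
  "'v set \<Rightarrow> ('v \<Rightarrow> 'p set) \<Rightarrow> ('v \<Rightarrow> 'p set) \<Rightarrow> ('p \<times> 'p) set \<Rightarrow> 'v
   \<Rightarrow> ('a::field, 'k::finite, 'p, 'v) lcode \<Rightarrow> ('p \<times> 'p) set \<Rightarrow> 'v \<Rightarrow> 'a ^ 'k ^ 'k" where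
  "system_matrix V In Out E S c f T =
     (\<chi> k' k. adt_Z V In Out E S c f (\<lambda>j. if j = k then 1 else 0) T k')"

definition solvable ::
  "'v set \<Rightarrow> ('v \<Rightarrow> 'p set) \<Rightarrow> ('v \<Rightarrow> 'p set) \<Rightarrow> ('p \<times> 'p) set \<Rightarrow> 'v
   \<Rightarrow> (nat \<Rightarrow> 'v) \<Rightarrow> nat \<Rightarrow> ('p \<times> 'p) set \<Rightarrow> ('a::field) itself \<Rightarrow> ('k::finite) itself \<Rightarrow> bool" where
  "solvable V In Out E S T N f _ _ \<longleftrightarrow>
     (\<exists>c :: ('a, 'k, 'p, 'v) lcode. \<forall>i<N. \<forall>X. \<forall>k.
        adt_Z V In Out E S c f X (T i) k = X k)"

definition code_solves ::
  "'v set \<Rightarrow> ('v \<Rightarrow> 'p set) \<Rightarrow> ('v \<Rightarrow> 'p set) \<Rightarrow> ('p \<times> 'p) set \<Rightarrow> 'v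
   \<Rightarrow> (nat \<Rightarrow> 'v) \<Rightarrow> nat \<Rightarrow> ('a::field, 'k::finite, 'p, 'v) lcode \<Rightarrow> ('p \<times> 'p) set \<Rightarrow> bool" where
  "code_solves V In Out E S T N c f \<longleftrightarrow>
     (\<forall>i<N. det (system_matrix V In Out E S c f (T i)) \<noteq> 0)"

end

theory Submission
  imports Defs
begin

text \<open>Fix a failure pattern \<open>f\<close> and a destination \<open>T\<^sub>i\<close> and regard the determinant of the
system matrix as a function of all coding coefficients. Changing a single coefficient changes the
system matrix by a rank-one matrix: for a local coefficient \<open>\<beta>(p, q)\<close> the flow is shifted by a
multiple of the response to a unit injection at \<open>q\<close>, which by acyclicity never reaches \<open>p\<close>.
Hence every determinant is affine in each coefficient separately, and it is nonzero for some code
whenever \<open>(G\<^sub>f, C)\<close> is solvable. Choosing the coefficients one at a time, each of the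
\<open>|F| N\<close> determinants rules out at most one value of the current coefficient, so over a field
with more than \<open>|F| N\<close> elements all of them can be kept nonzero simultaneously.\<close>

section \<open>Rank-one updates of determinants\<close>

lemma det_add_multiples_of_row:
  fixes A :: "'a::comm_ring_1^'n^'n"
  assumes "finite R" "j \<notin> R"
  shows "det (\<chi> i. if i \<in> R then row i A + c i *s row j A else row i A) = det A"
  using assms
proof (induction R rule: finite_induct)
  case (insert i R)
  let ?M = "\<chi> i. if i \<in> R then row i A + c i *s row j A else row i A"
  have "i \<noteq> j" using insert.prems by auto
  have "det (\<chi> k. if k \<in> insert i R then row k A + c k *s row j A else row k A)
      = det (\<chi> k. if k = i then row i ?M + c i *s row j ?M else row k ?M)"
    using insert.hyps insert.prems by (intro arg_cong[of _ _ det]) (auto simp: vec_eq_iff row_def)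
  also have "\<dots> = det ?M" by (rule det_row_operation[OF \<open>i \<noteq> j\<close>])
  also have "\<dots> = det A" using insert.IH insert.prems by simp
  finally show ?case .
qed (simp add: row_def)

lemma det_rank_one_update_rows:
  fixes A :: "'a::comm_ring_1^'n^'n"
  assumes "finite R"
  shows "det (\<chi> i. if i \<in> R then row i A + (x * u i) *s v else row i A)
     = det A + x * (\<Sum>j\<in>R. u j * det (\<chi> i. if i = j then v else row i A))"
  using assms
proof (induction R rule: finite_induct)
  case (insert j R)
  let ?M = "\<chi> i. if i \<in> R then row i A + (x * u i) *s v else row i A"
  let ?Aj = "\<chi> i. if i = j then v else row i A"
  have M: "(\<chi> i. if i = j then row j A else row i ?M) = ?M"
    using insert.hyps by (auto simp: vec_eq_iff row_def)
  have "det (\<chi> i. if i = j then v else row i ?M)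
      = det (\<chi> i. if i \<in> R then row i ?Aj + (x * u i) *s row j ?Aj else row i ?Aj)"
    using insert.hyps by (intro arg_cong[of _ _ det]) (auto simp: vec_eq_iff row_def)
  also have "\<dots> = det ?Aj" using insert.hyps by (rule det_add_multiples_of_row)
  finally have Aj: "det (\<chi> i. if i = j then v else row i ?M) = det ?Aj" .
  have "det (\<chi> i. if i \<in> insert j R then row i A + (x * u i) *s v else row i A)
      = det (\<chi> i. if i = j then row j A + (x * u j) *s v else row i ?M)"
    using insert.hyps by (intro arg_cong[of _ _ det]) (auto simp: vec_eq_iff row_def)
  also have "\<dots> = det (\<chi> i. if i = j then row j A else row i ?M)
      + det (\<chi> i. if i = j then (x * u j) *s v else row i ?M)"
    by (rule det_row_add)
  also have "\<dots> = det ?M + (x * u j) * det ?Aj"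
    unfolding M det_row_mul Aj ..
  also have "\<dots> = det A + x * (\<Sum>j\<in>insert j R. u j * det (\<chi> i. if i = j then v else row i A))"
    using insert.IH insert.hyps by (simp add: algebra_simps)
  finally show ?case .
qed (simp add: row_def)

lemma det_rank_one_update:
  fixes A :: "'a::comm_ring_1^'n^'n"
  shows "det (\<chi> i j. A$i$j + x * u i * v j)
     = det A + x * (\<Sum>j\<in>UNIV. u j * det (\<chi> i. if i = j then (\<chi> k. v k) else row i A))"
proof -
  have "det (\<chi> i j. A$i$j + x * u i * v j)
      = det (\<chi> i. if i \<in> UNIV then row i A + (x * u i) *s (\<chi> k. v k) else row i A)"
    by (intro arg_cong[of _ _ det]) (simp add: vec_eq_iff row_def algebra_simps)
  also have "\<dots> = det A + x * (\<Sum>j\<in>UNIV. u j * det (\<chi> i. if i = j then (\<chi> k. v k) else row i A))"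
    by (rule det_rank_one_update_rows) simp
  finally show ?thesis .
qed

section \<open>Functions affine in each variable\<close>

definition affine_in :: "(('i \<Rightarrow> 'a::comm_ring) \<Rightarrow> 'a) \<Rightarrow> 'i \<Rightarrow> bool" where
  "affine_in P i \<longleftrightarrow> (\<forall>g. \<exists>a b. \<forall>x. P (g(i := x)) = a + x * b)"

lemma affine_in_fun_upd_eq:
  fixes P :: "('i \<Rightarrow> 'a::comm_ring_1) \<Rightarrow> 'a"
  assumes "affine_in P i"
  shows "P (g(i := x)) = P (g(i := 0)) + x * (P (g(i := 1)) - P (g(i := 0)))"
proof -
  obtain a b where "\<And>x. P (g(i := x)) = a + x * b" using assms unfolding affine_in_def by blast
  then show ?thesis by (simp add: algebra_simps)
qed

lemma affine_in_diff:
  assumes "affine_in P i" "affine_in Q i"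
  shows "affine_in (\<lambda>g. P g - Q g) i"
  unfolding affine_in_def
proof
  fix g
  obtain a b a' b' where "\<And>x. P (g(i := x)) = a + x * b" "\<And>x. Q (g(i := x)) = a' + x * b'"
    using assms unfolding affine_in_def by metis
  then have "\<forall>x. P (g(i := x)) - Q (g(i := x)) = (a - a') + x * (b - b')"
    by (simp add: algebra_simps)
  then show "\<exists>a b. \<forall>x. P (g(i := x)) - Q (g(i := x)) = a + x * b" by blast
qed

lemma affine_in_fix_other:
  assumes "affine_in P i" "j \<noteq> i"
  shows "affine_in (\<lambda>g. P (g(j := c))) i"
  unfolding affine_in_def
proof
  fix g
  obtain a b where "\<And>x. P (g(j := c, i := x)) = a + x * b"
    using assms(1) unfolding affine_in_def by blast
  then show "\<exists>a b. \<forall>x. P (g(i := x, j := c)) = a + x * b"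
    using assms(2) by (metis fun_upd_twist)
qed

lemma affine_root_unique:
  fixes a b x y :: "'a::field"
  assumes "a + x * b = 0" "a + y * b = 0" "a \<noteq> 0 \<or> b \<noteq> 0"
  shows "x = y"
proof -
  have "(x - y) * b = (a + x * b) - (a + y * b)" by (simp add: algebra_simps)
  then have "(x - y) * b = 0" using assms(1,2) by simp
  moreover have "b \<noteq> 0" using assms by auto
  ultimately show ?thesis by simp
qed

lemma exists_avoiding_subsingletons:
  fixes Bad :: "'j \<Rightarrow> 'a \<Rightarrow> bool"
  assumes "finite J" "infinite (UNIV :: 'a set) \<or> card J < CARD('a)"
    and "\<And>j x y. j \<in> J \<Longrightarrow> Bad j x \<Longrightarrow> Bad j y \<Longrightarrow> x = y"
  shows "\<exists>x. \<forall>j\<in>J. \<not> Bad j x"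
proof -
  have sub: "{x. Bad j x} \<subseteq> {SOME x. Bad j x}" if "j \<in> J" for j
    using assms(3)[OF that] by (blast intro: someI)
  have card_bad: "card {x. Bad j x} \<le> 1" if "j \<in> J" for j
    using card_mono[OF _ sub[OF that]] by simp
  have "finite (\<Union>j\<in>J. {x. Bad j x})"
    using assms(1) finite_subset[OF sub] by blast
  moreover have "(\<Sum>j\<in>J. card {x. Bad j x}) \<le> (\<Sum>j\<in>J. 1)"
    by (rule sum_mono) (rule card_bad)
  then have "card (\<Union>j\<in>J. {x. Bad j x}) \<le> card J"
    using card_UN_le[OF assms(1), of "\<lambda>j. {x. Bad j x}"] by simp
  ultimately have "(\<Union>j\<in>J. {x. Bad j x}) \<noteq> UNIV"
    using assms(2) by auto
  then show ?thesis by blast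
qed

lemma affine_in_nonzero_drop_var:
  fixes P :: "('i \<Rightarrow> 'a::comm_ring_1) \<Rightarrow> 'a"
  assumes "affine_in P i" "\<exists>g. (\<forall>i'. i' \<notin> insert i I \<longrightarrow> g i' = 0) \<and> P g \<noteq> 0"
    and "\<forall>h. (\<forall>i'. i' \<notin> I \<longrightarrow> h i' = 0) \<longrightarrow> P (h(i := 1)) = P (h(i := 0))"
  shows "\<exists>h. (\<forall>i'. i' \<notin> I \<longrightarrow> h i' = 0) \<and> P (h(i := 0)) \<noteq> 0"
proof -
  obtain g where g: "\<forall>i'. i' \<notin> insert i I \<longrightarrow> g i' = 0" "P g \<noteq> 0" using assms(2) by blast
  let ?h = "g(i := 0)"
  have supp: "\<forall>i'. i' \<notin> I \<longrightarrow> ?h i' = 0" using g(1) by simp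
  have "P (g(i := 1)) = P (g(i := 0))" using spec[OF assms(3), of ?h] supp by simp
  then have "P g = P (?h(i := 0))" using affine_in_fun_upd_eq[OF assms(1), of g "g i"] by simp
  then show ?thesis using g(2) supp by metis
qed

text \<open>A Schwartz--Zippel argument for functions affine in each variable: fixing the variables
one at a time, each of the \<open>|J|\<close> functions excludes at most one value of the current one.\<close>

lemma multiaffine_common_nonzero:
  fixes P :: "'j \<Rightarrow> ('i \<Rightarrow> 'a::field) \<Rightarrow> 'a"
  assumes "finite I" "finite J" "infinite (UNIV :: 'a set) \<or> card J < CARD('a)"
    and "\<And>j i. j \<in> J \<Longrightarrow> i \<in> I \<Longrightarrow> affine_in (P j) i"
    and "\<And>j. j \<in> J \<Longrightarrow> \<exists>g. (\<forall>i. i \<notin> I \<longrightarrow> g i = 0) \<and> P j g \<noteq> 0"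
  shows "\<exists>g. (\<forall>i. i \<notin> I \<longrightarrow> g i = 0) \<and> (\<forall>j\<in>J. P j g \<noteq> 0)"
  using assms(1,4,5)
proof (induction I arbitrary: P rule: finite_induct)
  case empty
  have "P j (\<lambda>_. 0) \<noteq> 0" if j: "j \<in> J" for j
  proof -
    obtain g where "\<forall>i. g i = 0" "P j g \<noteq> 0" using empty.prems(2)[OF j] by blast
    moreover from this(1) have "g = (\<lambda>_. 0)" by blast
    ultimately show ?thesis by simp
  qed
  then show ?case by (intro exI[of _ "\<lambda>_. 0"]) simp
next
  case (insert i I)
  define a where "a = (\<lambda>j g. P j (g(i := 0)))"
  define b where "b = (\<lambda>j g. P j (g(i := 1)) - P j (g(i := 0)))"
  have P_eq: "P j (g(i := x)) = a j g + x * b j g" if "j \<in> J" for j g x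
    unfolding a_def b_def by (rule affine_in_fun_upd_eq[OF insert.prems(1)[OF that]]) simp
  define C where "C j \<longleftrightarrow> (\<exists>g. (\<forall>i. i \<notin> I \<longrightarrow> g i = 0) \<and> b j g \<noteq> 0)" for j
  \<comment> \<open>the coefficient of \<open>x\<close> unless it vanishes on the smaller support, else the constant term\<close>
  define P' where "P' j = (if C j then b j else a j)" for j
  have "affine_in (P' j) i'" if "j \<in> J" "i' \<in> I" for j i'
  proof -
    have "affine_in (P j) i'" "i \<noteq> i'" using insert that by auto
    then have fix_i: "affine_in (\<lambda>g. P j (g(i := c))) i'" for c
      by (rule affine_in_fix_other)
    then have "affine_in (a j) i'" "affine_in (b j) i'"
      unfolding a_def b_def using affine_in_diff[OF fix_i fix_i] by simp_all
    then show ?thesis unfolding P'_def by simp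
  qed
  moreover have "\<exists>g. (\<forall>i. i \<notin> I \<longrightarrow> g i = 0) \<and> P' j g \<noteq> 0" if j: "j \<in> J" for j
  proof (cases "C j")
    case True
    then show ?thesis unfolding P'_def C_def by simp
  next
    case False
    then have "\<forall>h. (\<forall>i'. i' \<notin> I \<longrightarrow> h i' = 0) \<longrightarrow> P j (h(i := 1)) = P j (h(i := 0))"
      unfolding C_def b_def by auto
    then have "\<exists>h. (\<forall>i'. i' \<notin> I \<longrightarrow> h i' = 0) \<and> P j (h(i := 0)) \<noteq> 0"
      using insert.prems(2)[OF j]
      by (intro affine_in_nonzero_drop_var[OF insert.prems(1)[OF j insertI1]])
    then show ?thesis using False unfolding P'_def a_def by simp
  qed
  ultimately obtain g where g: "\<forall>i'. i' \<notin> I \<longrightarrow> g i' = 0" "\<forall>j\<in>J. P' j g \<noteq> 0"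
    using insert.IH[of P'] by blast
  have "x = y" if "j \<in> J" "P j (g(i := x)) = 0" "P j (g(i := y)) = 0" for j x y
  proof (rule affine_root_unique)
    show "a j g + x * b j g = 0" "a j g + y * b j g = 0" using that P_eq by simp_all
    show "a j g \<noteq> 0 \<or> b j g \<noteq> 0" using g(2) that(1) unfolding P'_def by (auto split: if_splits)
  qed
  then obtain x where "\<forall>j\<in>J. P j (g(i := x)) \<noteq> 0"
    using exists_avoiding_subsingletons[OF assms(2,3), of "\<lambda>j x. P j (g(i := x)) = 0"] by blast
  moreover have "\<forall>i'. i' \<notin> insert i I \<longrightarrow> (g(i := x)) i' = 0" using g(1) by simp
  ultimately show ?case by blast
qed

section \<open>Fixpoints of rank-local operators\<close>

definition rank_local :: "('x \<Rightarrow> nat) \<Rightarrow> (('x \<Rightarrow> 'a) \<Rightarrow> 'x \<Rightarrow> 'a) \<Rightarrow> bool" where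
  "rank_local r \<Phi> \<longleftrightarrow> (\<forall>Y Y' x. (\<forall>y. r y < r x \<longrightarrow> Y y = Y' y) \<longrightarrow> \<Phi> Y x = \<Phi> Y' x)"

lemma rank_local_fixpoints_agree:
  assumes "rank_local r \<Phi>" "\<Phi> Y = Y" "\<Psi> Y' = Y'"
    and "\<And>Z x. r x < n \<Longrightarrow> \<Phi> Z x = \<Psi> Z x"
  shows "r x < n \<Longrightarrow> Y x = Y' x"
proof (induction "r x" arbitrary: x rule: less_induct)
  case less
  then have "\<forall>y. r y < r x \<longrightarrow> Y y = Y' y" by auto
  then have "\<Phi> Y x = \<Phi> Y' x" using assms(1) unfolding rank_local_def by blast
  then have "\<Phi> Y x = \<Psi> Y' x" using assms(4)[OF less.prems] by simp
  then show ?case using fun_cong[OF assms(2), of x] fun_cong[OF assms(3), of x] by simp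
qed

lemma rank_local_funpow_fixpoint:
  assumes "rank_local r \<Phi>" "\<And>x. r x < n"
  shows "\<Phi> ((\<Phi> ^^ n) Z) = (\<Phi> ^^ n) Z"
proof -
  have "r x < k \<Longrightarrow> (\<Phi> ^^ Suc k) Z x = (\<Phi> ^^ k) Z x" for k x
  proof (induction k arbitrary: x)
    case (Suc k)
    then have "\<forall>y. r y < r x \<longrightarrow> (\<Phi> ^^ Suc k) Z y = (\<Phi> ^^ k) Z y" by auto
    then have "\<Phi> ((\<Phi> ^^ Suc k) Z) x = \<Phi> ((\<Phi> ^^ k) Z) x"
      using assms(1) unfolding rank_local_def by blast
    then show ?case by simp
  qed simp
  then show ?thesis using assms(2) by (simp add: fun_eq_iff)
qed

lemma rank_local_ex1_fixpoint:
  assumes "rank_local r \<Phi>" "\<And>x. r x < n"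
  shows "\<exists>!Y. \<Phi> Y = Y"
proof -
  have "Y = Y'" if fixpoints: "\<Phi> Y = Y" "\<Phi> Y' = Y'" for Y Y'
  proof
    fix x
    show "Y x = Y' x"
      by (rule rank_local_fixpoints_agree[where \<Psi> = \<Phi>, OF assms(1) fixpoints refl assms(2)])
  qed
  then show ?thesis using rank_local_funpow_fixpoint[OF assms] by blast
qed

section \<open>Linear flows in an acyclic network\<close>

locale adt_graph =
  fixes V :: "'v set" and In Out :: "'v \<Rightarrow> 'p set" and E :: "('p \<times> 'p) set" and S :: 'v
  assumes finite_nodes: "finite V"
    and finite_node_ports: "\<forall>v\<in>V. finite (In v) \<and> finite (Out v)"
    and in_out_disjoint: "\<forall>u\<in>V. \<forall>v\<in>V. In u \<inter> Out v = {}"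
    and ports_disjoint: "\<forall>u\<in>V. \<forall>v\<in>V. u \<noteq> v \<longrightarrow> In u \<inter> In v = {} \<and> Out u \<inter> Out v = {}"
    and links_between_nodes: "E \<subseteq> {(e, e'). \<exists>u\<in>V. \<exists>v\<in>V. u \<noteq> v \<and> e \<in> Out u \<and> e' \<in> In v}"
    and acyclic_nodes: "acyclic (node_graph V In Out E)"
    and source_node: "S \<in> V"
begin

lemma finite_links: "finite E"
proof (rule finite_subset)
  show "E \<subseteq> (\<Union>v\<in>V. Out v) \<times> (\<Union>v\<in>V. In v)" using links_between_nodes by blast
  show "finite ((\<Union>v\<in>V. Out v) \<times> (\<Union>v\<in>V. In v))" using finite_nodes finite_node_ports by auto
qed

definition depth :: "'v \<Rightarrow> nat" where
  "depth v = card {u. (u, v) \<in> (node_graph V In Out E)\<^sup>+}"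

lemma ancestors_subset: "{u. (u, v) \<in> (node_graph V In Out E)\<^sup>+} \<subseteq> V"
proof -
  have "node_graph V In Out E \<subseteq> V \<times> V" unfolding node_graph_def by auto
  then show ?thesis using trancl_subset_Sigma by blast
qed

lemma depth_le: "depth v \<le> card V"
  unfolding depth_def using ancestors_subset finite_nodes by (rule card_mono[rotated])

lemma link_depth_less:
  assumes "(e, e') \<in> E" "v \<in> V" "e' \<in> In v"
  obtains u where "u \<in> V" "e \<in> Out u" "depth u < depth v"
proof -
  let ?G = "node_graph V In Out E"
  obtain u v' where uv': "u \<in> V" "v' \<in> V" "e \<in> Out u" "e' \<in> In v'"
    using assms(1) links_between_nodes by blast
  then have "v' = v" using assms(2,3) ports_disjoint by blast
  then have "(u, v) \<in> ?G" unfolding node_graph_def using uv' assms by blast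
  then have "{w. (w, u) \<in> ?G\<^sup>+} \<subset> {w. (w, v) \<in> ?G\<^sup>+}"
    using acyclic_nodes unfolding acyclic_def by (blast intro: trancl_into_trancl)
  then have "depth u < depth v"
    unfolding depth_def by (rule psubset_card_mono[OF finite_subset[OF ancestors_subset finite_nodes]])
  with uv' show thesis using that by blast
qed

abbreviation in_ports :: "'p set" where "in_ports \<equiv> \<Union>v\<in>V. In v"
abbreviation out_ports :: "'p set" where "out_ports \<equiv> \<Union>v\<in>V. Out v"

definition port_node :: "'p \<Rightarrow> 'v" where
  "port_node e = (THE v. v \<in> V \<and> (e \<in> In v \<or> e \<in> Out v))"

lemma port_node_eq: "v \<in> V \<Longrightarrow> e \<in> In v \<or> e \<in> Out v \<Longrightarrow> port_node e = v"
  unfolding port_node_def by (rule the_equality) (use ports_disjoint in_out_disjoint in blast)+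

text \<open>Ports are ranked so that every port only receives from ports of smaller rank:
input ports of a node rank below its output ports, which rank below the input ports they feed.\<close>

definition port_rank :: "'p \<Rightarrow> nat" where
  "port_rank e = 2 * depth (port_node e) + (if e \<in> out_ports then 1 else 0)"

lemma port_rank_less: "port_rank e < 2 * card V + 2"
  using depth_le[of "port_node e"] unfolding port_rank_def by simp

definition propagate ::
  "('p \<times> 'p) set \<Rightarrow> ('p \<Rightarrow> 'p \<Rightarrow> 'a::comm_ring_1) \<Rightarrow> ('p \<Rightarrow> 'a) \<Rightarrow> 'p \<Rightarrow> 'a" where
  "propagate f B Y e =
     (if e \<in> out_ports then (\<Sum>e'\<in>In (port_node e). B e' e * Y e')
      else if e \<in> in_ports then (\<Sum>e0\<in>{e0. (e0, e) \<in> E - f}. Y e0) else 0)"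

lemma propagate_rank_local: "rank_local port_rank (\<lambda>Y e. propagate f B Y e + b e)"
  unfolding rank_local_def
proof (intro allI impI)
  fix Y Y' :: "'p \<Rightarrow> 'a" and e
  assume below: "\<forall>y. port_rank y < port_rank e \<longrightarrow> Y y = Y' y"
  consider (out) v where "v \<in> V" "e \<in> Out v" | (inp) v where "v \<in> V" "e \<in> In v" "e \<notin> out_ports"
    | (none) "e \<notin> out_ports" "e \<notin> in_ports"
    by blast
  then show "propagate f B Y e + b e = propagate f B Y' e + b e"
  proof cases
    case out
    have "port_rank e' < port_rank e" if "e' \<in> In v" for e'
      using out that in_out_disjoint port_node_eq[of v] unfolding port_rank_def by auto
    then show ?thesis using out below port_node_eq[of v e] unfolding propagate_def by auto
  next
    case inp
    have "port_rank e0 < port_rank e" if e0: "(e0, e) \<in> E" for e0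
    proof -
      obtain u where "u \<in> V" "e0 \<in> Out u" "depth u < depth v"
        using link_depth_less[OF e0 inp(1,2)] .
      then show ?thesis using inp port_node_eq unfolding port_rank_def by auto
    qed
    then show ?thesis using inp below unfolding propagate_def by auto
  qed (simp add: propagate_def)
qed

text \<open>\<open>flow f B b\<close> is the signal carried by the ports of \<open>G\<^sub>f\<close> under local coefficients \<open>B\<close>
when \<open>b\<close> is injected at the output ports; the network equations of a code are the case
\<open>B = \<beta>\<close>, \<open>b = source c X\<close> (see \<open>adt_eqs_iff\<close> below).\<close>

definition flow :: "('p \<times> 'p) set \<Rightarrow> ('p \<Rightarrow> 'p \<Rightarrow> 'a::comm_ring_1) \<Rightarrow> ('p \<Rightarrow> 'a) \<Rightarrow> 'p \<Rightarrow> 'a" where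
  "flow f B b = (THE Y. (\<lambda>e. propagate f B Y e + b e) = Y)"

lemma ex1_flow: "\<exists>!Y. (\<lambda>e. propagate f B Y e + b e) = Y"
  using propagate_rank_local port_rank_less by (rule rank_local_ex1_fixpoint)

lemma flow_eq: "propagate f B (flow f B b) e + b e = flow f B b e"
proof -
  have "(\<lambda>e. propagate f B (flow f B b) e + b e) = flow f B b"
    unfolding flow_def by (rule theI'[OF ex1_flow])
  from fun_cong[OF this, of e] show ?thesis by simp
qed

lemma flow_unique:
  assumes "\<And>e. propagate f B Y e + b e = Y e"
  shows "flow f B b = Y"
  unfolding flow_def by (rule the1_equality[OF ex1_flow]) (use assms in \<open>simp add: fun_eq_iff\<close>)

lemma propagate_linear:
  "propagate f B (\<lambda>e. Y e + c * Z e) e = propagate f B Y e + c * propagate f B Z e"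
  unfolding propagate_def
  by (simp add: distrib_left sum.distrib sum_distrib_left mult.left_commute)

lemma flow_linear: "flow f B (\<lambda>e. b e + c * d e) = (\<lambda>e. flow f B b e + c * flow f B d e)"
proof (rule flow_unique)
  fix e
  have "propagate f B (\<lambda>e. flow f B b e + c * flow f B d e) e + (b e + c * d e)
      = (propagate f B (flow f B b) e + b e) + c * (propagate f B (flow f B d) e + d e)"
    unfolding propagate_linear by (simp add: distrib_left add_ac)
  then show "propagate f B (\<lambda>e. flow f B b e + c * flow f B d e) e + (b e + c * d e)
      = flow f B b e + c * flow f B d e"
    by (simp only: flow_eq)
qed

lemma flow_eq_zero_below:
  assumes "\<And>e. port_rank e < n \<Longrightarrow> b e = 0" "port_rank e < n"
  shows "flow f B b e = 0"
proof -
  have "(\<lambda>e. propagate f B (flow f B b) e + b e) = flow f B b" by (simp add: flow_eq)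
  moreover have "(\<lambda>e. propagate f B (\<lambda>_. 0) e + 0) = (\<lambda>_. 0)"
    by (rule ext) (simp add: propagate_def)
  ultimately show ?thesis
    using rank_local_fixpoints_agree[OF propagate_rank_local,
        where \<Psi> = "\<lambda>Y e. propagate f B Y e + 0" and Y' = "\<lambda>_. 0" and n = n] assms
    by simp
qed

lemma propagate_cong:
  assumes "\<And>v p q. v \<in> V \<Longrightarrow> p \<in> In v \<Longrightarrow> q \<in> Out v \<Longrightarrow> B p q = B' p q"
  shows "propagate f B = propagate f B'"
proof (intro ext)
  fix Y e
  show "propagate f B Y e = propagate f B' Y e"
  proof (cases "e \<in> out_ports")
    case True
    then obtain v where "v \<in> V" "e \<in> Out v" by blast
    then show ?thesis using assms port_node_eq[of v e] unfolding propagate_def by simp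
  qed (simp add: propagate_def)
qed

lemma propagate_beta_update:
  assumes v: "v \<in> V" "p \<in> In v" "q \<in> Out v"
  shows "propagate f (\<lambda>p' q'. B p' q' + x * (if p' = p \<and> q' = q then 1 else 0)) Y e
       = propagate f B Y e + x * (if e = q then Y p else 0)"
proof (cases "e \<in> out_ports")
  case True
  then obtain w where w: "w \<in> V" "e \<in> Out w" by blast
  have "(\<Sum>e'\<in>In w. (if e' = p \<and> e = q then 1 else 0) * Y e') = (if e = q then Y p else 0)"
  proof (cases "e = q")
    case True
    then have "w = v" using v w ports_disjoint by blast
    have "(\<Sum>e'\<in>In v. (if e' = p then 1 else 0) * Y e') = (\<Sum>e'\<in>In v. if e' = p then Y e' else 0)"
      by (rule sum.cong) auto
    then show ?thesis using True \<open>w = v\<close> v finite_node_ports by (simp add: sum.delta)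
  qed simp
  moreover have "(\<Sum>e'\<in>In w. (B e' e + x * (if e' = p \<and> e = q then 1 else 0)) * Y e')
      = (\<Sum>e'\<in>In w. B e' e * Y e') + x * (\<Sum>e'\<in>In w. (if e' = p \<and> e = q then 1 else 0) * Y e')"
    by (simp only: distrib_right sum.distrib sum_distrib_left mult.assoc)
  ultimately show ?thesis
    using True w port_node_eq[of w e] unfolding propagate_def by simp
next
  case False
  then show ?thesis using v unfolding propagate_def by auto
qed

text \<open>Raising the local coefficient from input port \<open>p\<close> to output port \<open>q\<close> of one node by \<open>x\<close>
adds \<open>x Y(p)\<close> times the response to a unit injection at \<open>q\<close>; the value at \<open>p\<close> itself is unchanged
because nothing injected at \<open>q\<close> flows back to \<open>p\<close>.\<close>

lemma flow_beta_update:
  assumes v: "v \<in> V" "p \<in> In v" "q \<in> Out v"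
  shows "flow f (\<lambda>p' q'. B p' q' + x * (if p' = p \<and> q' = q then 1 else 0)) b
       = (\<lambda>e. flow f B b e + (x * flow f B b p) * flow f B (\<lambda>e. if e = q then 1 else 0) e)"
proof (rule flow_unique)
  let ?Y = "flow f B b" and ?R = "flow f B (\<lambda>e. if e = q then 1 else 0)"
  have "port_rank p < port_rank q"
    using v in_out_disjoint port_node_eq[of v] unfolding port_rank_def by auto
  then have "?R p = 0" by (intro flow_eq_zero_below[of "port_rank q"]) auto
  then have "propagate f (\<lambda>p' q'. B p' q' + x * (if p' = p \<and> q' = q then 1 else 0))
        (\<lambda>e. ?Y e + (x * ?Y p) * ?R e) e + b e
      = (propagate f B ?Y e + b e) + (x * ?Y p) * (propagate f B ?R e + (if e = q then 1 else 0))"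
    for e
    unfolding propagate_beta_update[OF v] propagate_linear
    by (cases "e = q") (simp_all add: distrib_left add_ac mult_ac)
  then show "propagate f (\<lambda>p' q'. B p' q' + x * (if p' = p \<and> q' = q then 1 else 0))
        (\<lambda>e. ?Y e + (x * ?Y p) * ?R e) e + b e = ?Y e + (x * ?Y p) * ?R e" for e
    by (simp only: flow_eq[of f B b e] flow_eq[of f B "\<lambda>e. if e = q then 1 else 0" e])
qed

end

section \<open>Coding coefficients\<close>

datatype ('k, 'p, 'v) code_coord = Coef_alpha 'k 'p | Coef_beta 'p 'p | Coef_eps 'v 'p 'k

definition code_of :: "(('k, 'p, 'v) code_coord \<Rightarrow> 'a) \<Rightarrow> ('a, 'k, 'p, 'v) lcode" where
  "code_of g = \<lparr>alpha = (\<lambda>k p. g (Coef_alpha k p)), beta = (\<lambda>p q. g (Coef_beta p q)),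
     eps = (\<lambda>v p k. g (Coef_eps v p k))\<rparr>"

fun coord :: "('a, 'k, 'p, 'v) lcode \<Rightarrow> ('k, 'p, 'v) code_coord \<Rightarrow> 'a" where
  "coord c (Coef_alpha k p) = alpha c k p"
| "coord c (Coef_beta p q) = beta c p q"
| "coord c (Coef_eps v p k) = eps c v p k"

lemma system_matrix_of_solving_code:
  assumes "\<And>X k. adt_Z V In Out E S c f X t k = X k"
  shows "system_matrix V In Out E S c f t = mat 1"
  using assms unfolding system_matrix_def by (simp add: vec_eq_iff mat_def)

context adt_graph
begin

definition source :: "('a::field, 'k::finite, 'p, 'v) lcode \<Rightarrow> ('k \<Rightarrow> 'a) \<Rightarrow> 'p \<Rightarrow> 'a" where
  "source c X e = (if e \<in> Out S then (\<Sum>k\<in>UNIV. alpha c k e * X k) else 0)"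

lemma propagate_out:
  "v \<in> V \<Longrightarrow> e \<in> Out v \<Longrightarrow> propagate f B Y e = (\<Sum>e'\<in>In v. B e' e * Y e')"
  unfolding propagate_def using port_node_eq[of v e] by auto

lemma propagate_in:
  "v \<in> V \<Longrightarrow> e \<in> In v \<Longrightarrow> propagate f B Y e = (\<Sum>e0\<in>{e0. (e0, e) \<in> E - f}. Y e0)"
  unfolding propagate_def using in_out_disjoint by auto

lemma source_out: "v \<in> V \<Longrightarrow> e \<in> Out v \<Longrightarrow>
    source c X e = (if v = S then (\<Sum>k\<in>UNIV. alpha c k e * X k) else 0)"
  unfolding source_def using source_node ports_disjoint by auto

lemma source_in: "v \<in> V \<Longrightarrow> e \<in> In v \<Longrightarrow> source c X e = 0"
  unfolding source_def using source_node in_out_disjoint by auto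

lemma adt_eqs_iff:
  "adt_eqs V In Out E S c f X Y \<longleftrightarrow> (\<lambda>e. propagate f (beta c) Y e + source c X e) = Y"
proof -
  let ?Q = "\<lambda>e. propagate f (beta c) Y e + source c X e = Y e"
  have out: "?Q e \<longleftrightarrow> Y e = (\<Sum>e'\<in>In v. beta c e' e * Y e')
      + (if v = S then (\<Sum>k\<in>UNIV. alpha c k e * X k) else 0)" if "v \<in> V" "e \<in> Out v" for v e
    using that by (auto simp: propagate_out source_out)
  have inp: "?Q e \<longleftrightarrow> Y e = (\<Sum>e0\<in>{e0. (e0, e) \<in> E - f}. Y e0)" if "v \<in> V" "e \<in> In v" for v e
    using that by (auto simp: propagate_in source_in)
  have other: "?Q e \<longleftrightarrow> Y e = 0" if "e \<notin> ports V In Out" for e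
    using that source_node unfolding propagate_def source_def ports_def by auto
  show ?thesis
  proof
    assume eqs: "adt_eqs V In Out E S c f X Y"
    have "?Q e" for e
    proof (cases "e \<in> ports V In Out")
      case True
      then obtain v where "v \<in> V" "e \<in> Out v \<or> e \<in> In v" unfolding ports_def by blast
      then show ?thesis using eqs out inp unfolding adt_eqs_def by blast
    next
      case False
      then show ?thesis using eqs other unfolding adt_eqs_def by blast
    qed
    then show "(\<lambda>e. propagate f (beta c) Y e + source c X e) = Y" by (simp add: fun_eq_iff)
  next
    assume "(\<lambda>e. propagate f (beta c) Y e + source c X e) = Y"
    then have Q: "?Q e" for e by (simp add: fun_eq_iff)
    show "adt_eqs V In Out E S c f X Y"
      unfolding adt_eqs_def using Q out inp other by blast
  qed
qed

lemma adt_Y_eq_flow: "adt_Y V In Out E S c f X = flow f (beta c) (source c X)"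
  unfolding adt_Y_def flow_def adt_eqs_iff ..

lemma system_matrix_entry:
  "system_matrix V In Out E S c f t $ i $ j = (\<Sum>e'\<in>In t.
     eps c t e' i * flow f (beta c) (source c (\<lambda>k. if k = j then 1 else 0)) e')"
  unfolding system_matrix_def adt_Z_def adt_Y_eq_flow by simp

lemma system_matrix_cong:
  assumes "\<And>k e. e \<in> Out S \<Longrightarrow> alpha c k e = alpha c' k e"
    and "\<And>v p q. v \<in> V \<Longrightarrow> p \<in> In v \<Longrightarrow> q \<in> Out v \<Longrightarrow> beta c p q = beta c' p q"
    and "\<And>e k. e \<in> In t \<Longrightarrow> eps c t e k = eps c' t e k"
  shows "system_matrix V In Out E S c f t = system_matrix V In Out E S c' f t"
proof -
  have "source c = source c'" using assms(1) by (simp add: source_def fun_eq_iff)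
  moreover have "flow f (beta c) = flow f (beta c')"
  proof -
    have "propagate f (beta c) = propagate f (beta c')"
      by (rule propagate_cong) (rule assms(2))
    then show ?thesis unfolding flow_def by simp
  qed
  ultimately show ?thesis using assms(3) by (simp add: vec_eq_iff system_matrix_entry)
qed

lemma sum_affine_left:
  fixes z :: "'a::comm_ring"
  shows "(\<Sum>e\<in>A. (a e + z * b e) * y e) = (\<Sum>e\<in>A. a e * y e) + z * (\<Sum>e\<in>A. b e * y e)"
  by (simp add: distrib_right sum.distrib sum_distrib_left mult.assoc)

lemma sum_affine_right:
  fixes z :: "'a::comm_ring"
  shows "(\<Sum>e\<in>A. a e * (y e + z * r e)) = (\<Sum>e\<in>A. a e * y e) + z * (\<Sum>e\<in>A. a e * r e)"
  by (simp add: distrib_left sum.distrib sum_distrib_left mult.left_commute)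

lemma system_matrix_alpha_update:
  fixes g :: "('k::finite, 'p, 'v) code_coord \<Rightarrow> 'a::field"
  shows "\<exists>u w. \<forall>x. system_matrix V In Out E S (code_of (g(Coef_alpha k0 e0 := x))) f t
    = (\<chi> i j. system_matrix V In Out E S (code_of (g(Coef_alpha k0 e0 := 0))) f t $ i $ j + x * u i * w j)"
proof -
  define c where "c x = (code_of (g(Coef_alpha k0 e0 := x)) :: ('a, 'k, 'p, 'v) lcode)" for x
  define c0 where "c0 = c 0"
  define Y where "Y k = flow f (beta c0) (source c0 (\<lambda>j. if j = k then 1 else 0))" for k
  define d where "d e = (if e = e0 \<and> e \<in> Out S then 1 else 0 :: 'a)" for e
  define R where "R = flow f (beta c0) d"
  define A where "A = system_matrix V In Out E S c0 f t"
  have A_eq: "A $ i $ j = (\<Sum>e'\<in>In t. eps c0 t e' i * Y j e')" for i j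
    unfolding A_def Y_def by (rule system_matrix_entry)
  have alpha_eq: "alpha (c x) j e = alpha c0 j e + (if j = k0 \<and> e = e0 then x else 0)" for x j e
    by (simp add: c_def c0_def code_of_def)
  have "(\<Sum>j\<in>UNIV. (if j = k0 \<and> e = e0 then x else 0) * X j) = (if e = e0 then x * X k0 else 0)"
    for x :: 'a and X e
  proof -
    have "(\<Sum>j\<in>UNIV. (if j = k0 \<and> e = e0 then x else 0) * X j)
        = (\<Sum>j\<in>UNIV. if j = k0 then (if e = e0 then x * X k0 else 0) else 0)"
      by (rule sum.cong) auto
    then show ?thesis by simp
  qed
  then have source_eq: "source (c x) X = (\<lambda>e. source c0 X e + (x * X k0) * d e)" for x X
    by (simp add: fun_eq_iff source_def d_def alpha_eq distrib_right sum.distrib)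
  have "beta (c x) = beta c0" "eps (c x) = eps c0" for x
    by (simp_all add: c_def c0_def code_of_def fun_eq_iff)
  then have "system_matrix V In Out E S (c x) f t $ i $ j = (\<Sum>e'\<in>In t.
      eps c0 t e' i * (Y j e' + (x * (if j = k0 then 1 else 0)) * R e'))" for x i j
    unfolding system_matrix_entry source_eq flow_linear Y_def R_def by (simp add: eq_commute)
  then have "system_matrix V In Out E S (c x) f t = (\<chi> i j. A $ i $ j
      + x * (\<Sum>e'\<in>In t. eps c0 t e' i * R e') * (if j = k0 then 1 else 0))" for x
    by (simp add: vec_eq_iff A_eq sum_affine_right ac_simps)
  then have "\<exists>u w. \<forall>x. system_matrix V In Out E S (c x) f t = (\<chi> i j. A $ i $ j + x * u i * w j)"
    by (intro exI[of _ "\<lambda>i. \<Sum>e'\<in>In t. eps c0 t e' i * R e'"] exI[of _ "\<lambda>j. if j = k0 then 1 else 0"])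
      simp
  then show ?thesis unfolding c_def c0_def A_def .
qed

lemma system_matrix_beta_update:
  fixes g :: "('k::finite, 'p, 'v) code_coord \<Rightarrow> 'a::field"
  shows "\<exists>u w. \<forall>x. system_matrix V In Out E S (code_of (g(Coef_beta p q := x))) f t
    = (\<chi> i j. system_matrix V In Out E S (code_of (g(Coef_beta p q := 0))) f t $ i $ j + x * u i * w j)"
proof -
  define c where "c x = (code_of (g(Coef_beta p q := x)) :: ('a, 'k, 'p, 'v) lcode)" for x
  define c0 where "c0 = c 0"
  have source_eq: "source (c x) = source c0" and eps_eq: "eps (c x) = eps c0" for x
    by (simp_all add: c_def c0_def code_of_def fun_eq_iff source_def)
  have beta_eq: "beta (c x) = (\<lambda>p' q'. beta c0 p' q' + x * (if p' = p \<and> q' = q then 1 else 0))" for x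
    by (simp add: c_def c0_def code_of_def fun_eq_iff)
  show ?thesis
  proof (cases "\<exists>v\<in>V. p \<in> In v \<and> q \<in> Out v")
    case True
    then obtain v where v: "v \<in> V" "p \<in> In v" "q \<in> Out v" by blast
    define Y where "Y k = flow f (beta c0) (source c0 (\<lambda>j. if j = k then 1 else 0))" for k
    define R where "R = flow f (beta c0) (\<lambda>e. if e = q then 1 else 0)"
    define A where "A = system_matrix V In Out E S c0 f t"
    have A_eq: "A $ i $ j = (\<Sum>e'\<in>In t. eps c0 t e' i * Y j e')" for i j
      unfolding A_def Y_def by (rule system_matrix_entry)
    have "system_matrix V In Out E S (c x) f t $ i $ j
        = (\<Sum>e'\<in>In t. eps c0 t e' i * (Y j e' + (x * Y j p) * R e'))" for x i j
      unfolding system_matrix_entry beta_eq source_eq eps_eq flow_beta_update[OF v] Y_def R_def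
      by simp
    then have "system_matrix V In Out E S (c x) f t = (\<chi> i j. A $ i $ j
        + x * (\<Sum>e'\<in>In t. eps c0 t e' i * R e') * Y j p)" for x
      by (simp add: vec_eq_iff A_eq sum_affine_right sum_distrib_left ac_simps)
    then have "\<exists>u w. \<forall>x. system_matrix V In Out E S (c x) f t = (\<chi> i j. A $ i $ j + x * u i * w j)"
      by (intro exI[of _ "\<lambda>i. \<Sum>e'\<in>In t. eps c0 t e' i * R e'"] exI[of _ "\<lambda>j. Y j p"]) simp
    then show ?thesis unfolding c_def c0_def A_def .
  next
    case False
    then have "system_matrix V In Out E S (c x) f t = system_matrix V In Out E S c0 f t" for x
      by (intro system_matrix_cong) (auto simp: c_def c0_def code_of_def)
    then have "\<exists>u w. \<forall>x. system_matrix V In Out E S (c x) f t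
        = (\<chi> i j. system_matrix V In Out E S c0 f t $ i $ j + x * u i * w j)"
      by (intro exI[of _ "\<lambda>_. 0"]) (simp add: vec_eq_iff)
    then show ?thesis unfolding c_def c0_def .
  qed
qed

lemma system_matrix_eps_update:
  fixes g :: "('k::finite, 'p, 'v) code_coord \<Rightarrow> 'a::field"
  shows "\<exists>u w. \<forall>x. system_matrix V In Out E S (code_of (g(Coef_eps t' p k0 := x))) f t
    = (\<chi> i j. system_matrix V In Out E S (code_of (g(Coef_eps t' p k0 := 0))) f t $ i $ j + x * u i * w j)"
proof -
  define c where "c x = (code_of (g(Coef_eps t' p k0 := x)) :: ('a, 'k, 'p, 'v) lcode)" for x
  define c0 where "c0 = c 0"
  define Y where "Y k = flow f (beta c0) (source c0 (\<lambda>j. if j = k then 1 else 0))" for k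
  define A where "A = system_matrix V In Out E S c0 f t"
  have A_eq: "A $ i $ j = (\<Sum>e'\<in>In t. eps c0 t e' i * Y j e')" for i j
    unfolding A_def Y_def by (rule system_matrix_entry)
  have "beta (c x) = beta c0" "source (c x) = source c0" for x
    by (simp_all add: c_def c0_def code_of_def fun_eq_iff source_def)
  moreover have "eps (c x) t e' i = eps c0 t e' i + x * (if t = t' \<and> e' = p \<and> i = k0 then 1 else 0)"
    for x e' i
    by (simp add: c_def c0_def code_of_def)
  ultimately have "system_matrix V In Out E S (c x) f t $ i $ j = A $ i $ j
      + x * (\<Sum>e'\<in>In t. (if t = t' \<and> e' = p \<and> i = k0 then 1 else 0) * Y j e')" for x i j
    unfolding system_matrix_entry by (simp add: A_eq Y_def sum_affine_left)
  moreover have "(\<Sum>e'\<in>In t. (if t = t' \<and> e' = p \<and> i = k0 then 1 else 0) * Y j e')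
      = (if i = k0 then 1 else 0) * (\<Sum>e'\<in>In t. (if t = t' \<and> e' = p then 1 else 0) * Y j e')"
    for i j by (cases "i = k0") simp_all
  ultimately have "system_matrix V In Out E S (c x) f t = (\<chi> i j. A $ i $ j
      + x * (if i = k0 then 1 else 0) * (\<Sum>e'\<in>In t. (if t = t' \<and> e' = p then 1 else 0) * Y j e'))" for x
    by (simp add: vec_eq_iff mult.assoc)
  then have "\<exists>u w. \<forall>x. system_matrix V In Out E S (c x) f t = (\<chi> i j. A $ i $ j + x * u i * w j)"
    by (intro exI[of _ "\<lambda>i. if i = k0 then 1 else 0"]
        exI[of _ "\<lambda>j. \<Sum>e'\<in>In t. (if t = t' \<and> e' = p then 1 else 0) * Y j e'"]) simp
  then show ?thesis unfolding c_def c0_def A_def .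
qed

lemma system_matrix_rank_one_update:
  fixes g :: "('k::finite, 'p, 'v) code_coord \<Rightarrow> 'a::field"
  shows "\<exists>A u w. \<forall>x. system_matrix V In Out E S (code_of (g(\<iota> := x))) f t
                   = (\<chi> i j. A$i$j + x * u i * w j)"
proof (cases \<iota>)
  case (Coef_alpha k e)
  then show ?thesis using system_matrix_alpha_update[of g k e f t] by auto
next
  case (Coef_beta p q)
  then show ?thesis using system_matrix_beta_update[of g p q f t] by auto
next
  case (Coef_eps t' p k)
  then show ?thesis using system_matrix_eps_update[of g t' p k f t] by auto
qed

lemma det_system_matrix_affine_in:
  "affine_in (\<lambda>g. det (system_matrix V In Out E S (code_of g :: ('a::field, 'k::finite, 'p, 'v) lcode) f t)) \<iota>"
  unfolding affine_in_def
proof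
  fix g :: "('k, 'p, 'v) code_coord \<Rightarrow> 'a"
  obtain A u w where "\<forall>x. system_matrix V In Out E S (code_of (g(\<iota> := x))) f t
                        = (\<chi> i j. A$i$j + x * u i * w j)"
    using system_matrix_rank_one_update by blast
  then show "\<exists>a b. \<forall>x. det (system_matrix V In Out E S (code_of (g(\<iota> := x))) f t) = a + x * b"
    by (simp add: det_rank_one_update) blast
qed

definition relevant_coords :: "'v set \<Rightarrow> ('k::finite, 'p, 'v) code_coord set" where
  "relevant_coords Ts = {Coef_alpha k e | k e. e \<in> Out S}
     \<union> {Coef_beta p q | p q. \<exists>v\<in>V. p \<in> In v \<and> q \<in> Out v}
     \<union> {Coef_eps t e k | t e k. t \<in> Ts \<and> e \<in> In t}"

lemma finite_relevant_coords:
  assumes "finite Ts" "Ts \<subseteq> V"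
  shows "finite (relevant_coords Ts :: ('k::finite, 'p, 'v) code_coord set)"
proof (rule finite_subset)
  let ?U = "(\<lambda>(k, e). Coef_alpha k e) ` ((UNIV :: 'k set) \<times> Out S)
     \<union> (\<lambda>(p, q). Coef_beta p q) ` (\<Union>v\<in>V. In v \<times> Out v)
     \<union> (\<lambda>(t, e, k). Coef_eps t e k) ` (SIGMA t:Ts. In t \<times> (UNIV :: 'k set))"
  show "relevant_coords Ts \<subseteq> ?U"
  proof
    fix \<iota> :: "('k, 'p, 'v) code_coord" assume "\<iota> \<in> relevant_coords Ts"
    then consider (alpha) k e where "\<iota> = Coef_alpha k e" "e \<in> Out S"
      | (beta) p q v where "\<iota> = Coef_beta p q" "v \<in> V" "p \<in> In v" "q \<in> Out v"
      | (eps) t e k where "\<iota> = Coef_eps t e k" "t \<in> Ts" "e \<in> In t"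
      unfolding relevant_coords_def by blast
    then show "\<iota> \<in> ?U"
    proof cases
      case alpha then show ?thesis by (intro UnI1 image_eqI[where x = "(k, e)"]) auto
    next
      case beta then show ?thesis by (intro UnI1 UnI2 image_eqI[where x = "(p, q)"]) auto
    next
      case eps then show ?thesis by (intro UnI2 image_eqI[where x = "(t, e, k)"]) auto
    qed
  qed
  show "finite ?U"
    using assms finite_nodes finite_node_ports source_node
    by (intro finite_UnI finite_imageI finite_cartesian_product finite_SigmaI finite_UN_I)
      (auto intro: finite_subset)
qed

lemma system_matrix_restrict_relevant:
  assumes "t \<in> Ts"
  shows "system_matrix V In Out E S (code_of (\<lambda>\<iota>. if \<iota> \<in> relevant_coords Ts then coord c \<iota> else 0)) f t
       = system_matrix V In Out E S c f t"
  by (rule system_matrix_cong) (use assms in \<open>auto simp: code_of_def relevant_coords_def\<close>)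

lemma solvable_imp_relevant_code:
  assumes "solvable V In Out E S T N f TYPE('a::field) TYPE('k::finite)" "i < N" "T i \<in> Ts"
  shows "\<exists>g. (\<forall>\<iota>. \<iota> \<notin> relevant_coords Ts \<longrightarrow> g \<iota> = 0) \<and>
           det (system_matrix V In Out E S (code_of g :: ('a, 'k, 'p, 'v) lcode) f (T i)) = 1"
proof -
  obtain c :: "('a, 'k, 'p, 'v) lcode" where "\<forall>i<N. \<forall>X k. adt_Z V In Out E S c f X (T i) k = X k"
    using assms(1) unfolding solvable_def by blast
  then have "system_matrix V In Out E S c f (T i) = mat 1"
    using assms(2) by (intro system_matrix_of_solving_code) blast
  then have "det (system_matrix V In Out E S
      (code_of (\<lambda>\<iota>. if \<iota> \<in> relevant_coords Ts then coord c \<iota> else 0)) f (T i)) = 1"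
    by (simp add: system_matrix_restrict_relevant[OF assms(3)])
  then show ?thesis by (intro exI[of _ "\<lambda>\<iota>. if \<iota> \<in> relevant_coords Ts then coord c \<iota> else 0"]) simp
qed

end

lemma adt_network_imp_adt_graph: "adt_network V In Out E S T N \<Longrightarrow> adt_graph V In Out E S"
  unfolding adt_network_def by unfold_locales blast+

theorem theorem9:
  fixes V :: "'v set" and In Out :: "'v \<Rightarrow> 'p set" and E :: "('p \<times> 'p) set"
    and S :: 'v and T :: "nat \<Rightarrow> 'v" and N :: nat
    and \<F> :: "('p \<times> 'p) set set"
  assumes "adt_network V In Out E S T N"
    and "\<F> = {f. f \<subseteq> E \<and> solvable V In Out E S T N f TYPE('a::{finite,field}) TYPE('k::finite)}"
    and "card \<F> * N < CARD('a)"
  shows "\<exists>c :: ('a, 'k, 'p, 'v) lcode. \<forall>f\<in>\<F>. code_solves V In Out E S T N c f"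
proof -
  interpret adt_graph V In Out E S using assms(1) by (rule adt_network_imp_adt_graph)
  have T: "T i \<in> V" if "i < N" for i using assms(1) that unfolding adt_network_def by blast
  define I :: "('k, 'p, 'v) code_coord set" where "I = relevant_coords (T ` {..<N})"
  define P where "P j g = det (system_matrix V In Out E S (code_of g :: ('a, 'k, 'p, 'v) lcode)
      (fst j) (T (snd j)))" for j g
  have "\<exists>g. (\<forall>\<iota>. \<iota> \<notin> I \<longrightarrow> g \<iota> = 0) \<and> (\<forall>j\<in>\<F> \<times> {..<N}. P j g \<noteq> 0)"
  proof (rule multiaffine_common_nonzero)
    show "finite I" unfolding I_def using T by (intro finite_relevant_coords) auto
    have "finite \<F>" by (rule finite_subset[of _ "Pow E"]) (use assms(2) finite_links in auto)
    then show "finite (\<F> \<times> {..<N})" by simp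
    show "infinite (UNIV :: 'a set) \<or> card (\<F> \<times> {..<N}) < CARD('a)"
      using assms(3) by (simp add: card_cartesian_product)
    show "affine_in (P j) \<iota>" for j \<iota> unfolding P_def by (rule det_system_matrix_affine_in)
    show "\<exists>g. (\<forall>\<iota>. \<iota> \<notin> I \<longrightarrow> g \<iota> = 0) \<and> P j g \<noteq> 0" if j_mem: "j \<in> \<F> \<times> {..<N}" for j
    proof -
      obtain f i where j: "j = (f, i)" "f \<in> \<F>" "i < N" using j_mem by auto
      then have "solvable V In Out E S T N f TYPE('a) TYPE('k)" using assms(2) by blast
      from solvable_imp_relevant_code[OF this \<open>i < N\<close>, of "T ` {..<N}"] j(3)
      show ?thesis unfolding I_def P_def j(1) by auto
    qed
  qed
  then obtain g where "\<forall>j\<in>\<F> \<times> {..<N}. P j g \<noteq> 0" by blast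
  then show ?thesis unfolding code_solves_def P_def by (intro exI[of _ "code_of g"]) auto
qed

end
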